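(* Let $n \geq 1$ be the number of training examples and let $\alpha_0, \beta_0 > 0$ be the parameters of a Beta prior $\textsc{Beta}(\alpha_0,\beta_0)$. Let $\widehat{P}_X \colon \mathbb{R}^d \to [0,1]$ be an estimator of the data density $\mathbb{P}(X=x)$ and $\widehat{P}_{Y|X} \colon \mathbb{R}^d \to [0,1]$ an estimator of the class-conditional probability $\mathbb{P}(Y=1\mid X=x)$, and define the expected anomaly posterior score $$\phi(x) = \frac{\alpha_0 + n\, \widehat{P}_X(x)\, \widehat{P}_{Y|X}(x)}{\alpha_0 + \beta_0 + n\, \widehat{P}_X(x)}.$$ Let $x_{\mathrm{r}}, x_{\mathrm{u}}, x_{\mathrm{i}} \in \mathbb{R}^d$ be, respectively, a realistic, an unrealistic, and an indistinguishable anomaly, and suppose the estimators satisfy the corresponding properties, namely $\widehat{P}_{Y|X}(x_{\mathrm{r}}) \in [0.5,1]$ and $\widehat{P}_X(x_{\mathrm{r}})>0$; $\widehat{P}_{Y|X}(x_{\mathrm{u}}) \in [0.5,1]$ and $\widehat{P}_X(x_{\mathrm{u}})=0$; $\widehat{P}_{Y|X}(x_{\mathrm{i}}) = 0$ and $\widehat{P}_X(x_{\mathrm{i}})>0$. Then $$\frac{\alpha_0}{\alpha_0+\beta_0} < 0.5 \implies \phi(x_{\mathrm{r}}) > \phi(x_{\mathrm{u}}) > \phi(x_{\mathrm{i}}).$$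
   Context: Setting: $X$ is a random feature vector in $\mathbb{R}^d$ and $Y\in\{0,1\}$ a label ($0$ normal, $1$ anomaly). An example $x$ is called a realistic anomaly if $\mathbb{P}(Y=1\mid X=x)\in[0.5,1]$ and $\mathbb{P}(X=x)>0$; an unrealistic anomaly if $\mathbb{P}(Y=1\mid X=x)\in[0.5,1]$ and $\mathbb{P}(X=x)=0$; an indistinguishable anomaly if $\mathbb{P}(Y=1\mid X=x)=0$ and $\mathbb{P}(X=x)>0$. The score $\phi(x)$ is the mean of the posterior $\textsc{Beta}(\alpha_0+\alpha_1,\beta_0+N-\alpha_1)$ of the anomaly probability $p_x$ with pseudo-counts $N = n\widehat{P}_X(x)$ and $\alpha_1 = n\widehat{P}_X(x)\widehat{P}_{Y|X}(x)$. *)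

theory Defs
  imports "HOL-Analysis.Analysis"
begin

text \<open>Expected anomaly posterior score: mean of Beta(alpha0 + alpha1, beta0 + N - alpha1)
  with N = n * PX x and alpha1 = n * PX x * PYX x.\<close>
definition phi :: "nat \<Rightarrow> real \<Rightarrow> real \<Rightarrow> ('x \<Rightarrow> real) \<Rightarrow> ('x \<Rightarrow> real) \<Rightarrow> 'x \<Rightarrow> real" where
  "phi n \<alpha>0 \<beta>0 PX PYX x =
     (\<alpha>0 + real n * PX x * PYX x) / (\<alpha>0 + \<beta>0 + real n * PX x)"

end

(* The score phi x = (alpha0 + N p) / ((alpha0 + beta0) + N), with N = n PX x and p = PYX x,
   is the mediant of the prior mean alpha0 / (alpha0 + beta0) and of p = N p / N.
   Without mass (N = 0) it is the prior mean; with mass it lies strictly between the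
   prior mean and p. A realistic anomaly has p >= 0.5 above a prior mean below 0.5, an
   indistinguishable one has p = 0 below it, and an unrealistic one sits exactly at it. *)
theory Submission
  imports Defs
begin

lemma mediant_strictly_between:
  fixes a b c d :: real
  assumes "b > 0" and "d > 0" and "a / b < c / d"
  shows "a / b < (a + c) / (b + d)" and "(a + c) / (b + d) < c / d"
proof -
  have cross: "a * d < c * b"
    using assms by (simp add: divide_simps mult.commute)
  show "a / b < (a + c) / (b + d)"
    using assms(1,2) cross by (simp add: divide_simps algebra_simps)
  show "(a + c) / (b + d) < c / d"
    using assms(1,2) cross by (simp add: divide_simps algebra_simps)
qed

lemma phi_as_mediant:
  "phi n \<alpha>0 \<beta>0 PX PYX x = (\<alpha>0 + real n * PX x * PYX x) / ((\<alpha>0 + \<beta>0) + real n * PX x)"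
  by (simp add: phi_def add.assoc)

lemma phi_eq_prior_mean:
  assumes "PX x = 0"
  shows "phi n \<alpha>0 \<beta>0 PX PYX x = \<alpha>0 / (\<alpha>0 + \<beta>0)"
  using assms by (simp add: phi_def)

lemma phi_gt_prior_mean:
  assumes "\<alpha>0 + \<beta>0 > 0" and "real n * PX x > 0" and "\<alpha>0 / (\<alpha>0 + \<beta>0) < PYX x"
  shows "\<alpha>0 / (\<alpha>0 + \<beta>0) < phi n \<alpha>0 \<beta>0 PX PYX x"
proof -
  have "\<alpha>0 / (\<alpha>0 + \<beta>0) < real n * PX x * PYX x / (real n * PX x)"
    using assms(2,3) by (simp only: nonzero_mult_div_cancel_left less_irrefl)
  from mediant_strictly_between(1)[OF assms(1,2) this] show ?thesis
    unfolding phi_as_mediant .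
qed

lemma phi_lt_prior_mean:
  assumes "\<alpha>0 + \<beta>0 > 0" and "real n * PX x > 0" and "PYX x < \<alpha>0 / (\<alpha>0 + \<beta>0)"
  shows "phi n \<alpha>0 \<beta>0 PX PYX x < \<alpha>0 / (\<alpha>0 + \<beta>0)"
proof -
  have "real n * PX x * PYX x / (real n * PX x) < \<alpha>0 / (\<alpha>0 + \<beta>0)"
    using assms(2,3) by (simp only: nonzero_mult_div_cancel_left less_irrefl)
  from mediant_strictly_between(2)[OF assms(2,1) this] show ?thesis
    unfolding phi_as_mediant by (simp add: add.commute)
qed

theorem theorem1:
  fixes n :: nat and \<alpha>0 \<beta>0 :: real
    and PX PYX :: "real ^ 'd \<Rightarrow> real"
    and xr xu xi :: "real ^ 'd"
  assumes "n \<ge> 1" and "\<alpha>0 > 0" and "\<beta>0 > 0"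
    and "\<forall>x. PX x \<in> {0..1}" and "\<forall>x. PYX x \<in> {0..1}"
    and "PYX xr \<in> {0.5..1}" and "PX xr > 0"
    and "PYX xu \<in> {0.5..1}" and "PX xu = 0"
    and "PYX xi = 0" and "PX xi > 0"
  shows "\<alpha>0 / (\<alpha>0 + \<beta>0) < 0.5 \<longrightarrow>
    phi n \<alpha>0 \<beta>0 PX PYX xr > phi n \<alpha>0 \<beta>0 PX PYX xu \<and>
    phi n \<alpha>0 \<beta>0 PX PYX xu > phi n \<alpha>0 \<beta>0 PX PYX xi"
proof
  assume prior_lt_half: "\<alpha>0 / (\<alpha>0 + \<beta>0) < 0.5"
  have pos: "\<alpha>0 + \<beta>0 > 0" using assms(2,3) by simp
  have "0.5 \<le> PYX xr" using assms(6) by simp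
  with prior_lt_half have "\<alpha>0 / (\<alpha>0 + \<beta>0) < PYX xr" by linarith
  moreover have "real n * PX xr > 0" and "real n * PX xi > 0"
    using assms(1,7,11) by simp_all
  moreover have "PYX xi < \<alpha>0 / (\<alpha>0 + \<beta>0)"
    using assms(2,10) pos by simp
  ultimately have "\<alpha>0 / (\<alpha>0 + \<beta>0) < phi n \<alpha>0 \<beta>0 PX PYX xr"
    and "phi n \<alpha>0 \<beta>0 PX PYX xi < \<alpha>0 / (\<alpha>0 + \<beta>0)"
    by (simp_all add: phi_gt_prior_mean[OF pos] phi_lt_prior_mean[OF pos])
  moreover have "phi n \<alpha>0 \<beta>0 PX PYX xu = \<alpha>0 / (\<alpha>0 + \<beta>0)"
    using phi_eq_prior_mean assms(9) .
  ultimately show "phi n \<alpha>0 \<beta>0 PX PYX xr > phi n \<alpha>0 \<beta>0 PX PYX xu \<and>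
      phi n \<alpha>0 \<beta>0 PX PYX xu > phi n \<alpha>0 \<beta>0 PX PYX xi"
    by simp
qed

end
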